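(* Let $A$ be a finite alphabet with $|A|=n$ and $L\subseteq A^*$. Then for every $m\in\mathbb N$ the tuple $(m,\dots,m)$ is componentwise dominated by the Parikh image of some word of $L$ if and only if there is an enumeration $b_1,\dots,b_n$ of $A$ such that $b_1^*b_2^*\cdots b_n^*\subseteq \downarrow L$.
   Context: The Parikh image of $w$ is the vector of the numbers of occurrences of each symbol of $A$ in $w$ (in a fixed order). $\downarrow L=\{u\mid \exists v\in L,\ u \text{ is a subsequence of } v\}$ is the downward closure of $L$. *)

theory Defs
  imports Main "HOL-Library.Sublist"
begin

definition parikh :: "'a list \<Rightarrow> 'a \<Rightarrow> nat" where
  "parikh w a = count_list w a"

definition down_closure :: "'a list set \<Rightarrow> 'a list set" where
  "down_closure L = {u. \<exists>v\<in>L. subseq u v}"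

text \<open>The language b_1^* b_2^* ... b_n^* for a list bs = [b_1,...,b_n].\<close>
definition star_concat :: "'a list \<Rightarrow> 'a list set" where
  "star_concat bs = {concat (map (\<lambda>(b, k). replicate k b) (zip bs ks)) | ks.
                      length ks = length bs}"

end

theory Submission
  imports Defs
begin

(* For an enumeration bs = [b_1,...,b_n] of A write blocks m bs for the
   word b_1^m b_2^m ... b_n^m.  Every word of b_1^* ... b_n^* is a subsequence of
   blocks m bs for m large enough, and blocks m bs is a subsequence of blocks m' bs
   for m <= m'; hence b_1^* ... b_n^* is contained in the downward closure of L iff
   every blocks m bs is a subsequence of some word of L.
   (<=) If blocks m bs embeds into w then every letter of A occurs at least m times in w.
   (=>) The combinatorial core is a greedy extraction: if every letter of a set S with
   |S| = c occurs at least c*m times in w, cut w after the first position where some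
   letter b of S has occurred m times; the prefix contains b^m and every other letter
   at most m times, so induction on S - {b} yields an enumeration bs of S with
   blocks m bs embedding into w.  Applying this to words of L with all letters
   occurring n*m times gives, for every m, an enumeration that works for m; since there
   are only finitely many enumerations and "works for m" is antitone in m, a single
   enumeration works for all m. *)

lemma count_list_subseq: "subseq u v \<Longrightarrow> count_list u a \<le> count_list v a"
  by (induction rule: list_emb.induct) auto

lemma replicate_subseq_of_count: "m \<le> count_list xs b \<Longrightarrow> subseq (replicate m b) xs"
proof (induction xs arbitrary: m)
  case Nil
  then show ?case by simp
next
  case (Cons x xs)
  show ?case
  proof (cases "x = b")
    case True
    with Cons show ?thesis by (cases m) auto
  next
    case False
    with Cons show ?thesis by auto
  qed
qed

lemma count_list_replicate: "count_list (replicate m b) a = (if a = b then m else 0)"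
  by (induction m) auto

lemma subseq_replicate_mono: "k \<le> m \<Longrightarrow> subseq (replicate k b) (replicate m b)"
  by (rule replicate_subseq_of_count) (simp add: count_list_replicate)

lemma count_list_take_Suc: "count_list (take (Suc j) w) a \<le> Suc (count_list (take j w) a)"
  by (cases "j < length w") (simp_all add: take_Suc_conv_app_nth)

definition blocks :: "nat \<Rightarrow> 'a list \<Rightarrow> 'a list" where
  "blocks m bs = concat (map (\<lambda>b. replicate m b) bs)"

lemma blocks_Nil [simp]: "blocks m [] = []"
  and blocks_Cons [simp]: "blocks m (b # bs) = replicate m b @ blocks m bs"
  by (simp_all add: blocks_def)

lemma count_list_blocks:
  "distinct bs \<Longrightarrow> count_list (blocks m bs) a = (if a \<in> set bs then m else 0)"
  by (induction bs) (auto simp: count_list_replicate)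

lemma blocks_mono: "m \<le> m' \<Longrightarrow> subseq (blocks m bs) (blocks m' bs)"
  by (induction bs) (auto intro!: list_emb_append_mono subseq_replicate_mono)

lemma blocks_in_star_concat: "blocks m bs \<in> star_concat bs"
proof -
  have "blocks m bs = concat (map (\<lambda>(b, k). replicate k b) (zip bs (replicate (length bs) m)))"
    by (induction bs) auto
  then show ?thesis unfolding star_concat_def by force
qed

(* Every word b_1^k_1 ... b_n^k_n embeds into the block word with m = k_1 + ... + k_n. *)
lemma star_concat_subseq_blocks:
  assumes "u \<in> star_concat bs"
  shows "\<exists>m. subseq u (blocks m bs)"
proof -
  obtain ks where ks: "length ks = length bs"
    and u: "u = concat (map (\<lambda>(b, k). replicate k b) (zip bs ks))"
    using assms unfolding star_concat_def by blast
  have "(\<forall>k\<in>set ks. k \<le> m) \<longrightarrow>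
        subseq (concat (map (\<lambda>(b, k). replicate k b) (zip bs ks))) (blocks m bs)" for m
    using ks[symmetric] by (induction bs ks rule: list_induct2)
      (auto intro!: list_emb_append_mono subseq_replicate_mono)
  then have "subseq u (blocks (sum_list ks) bs)"
    unfolding u by (simp add: member_le_sum_list)
  then show ?thesis ..
qed

lemma star_concat_subset_down_closure_iff:
  "star_concat bs \<subseteq> down_closure L \<longleftrightarrow> (\<forall>m. \<exists>w\<in>L. subseq (blocks m bs) w)"
proof
  assume "star_concat bs \<subseteq> down_closure L"
  then show "\<forall>m. \<exists>w\<in>L. subseq (blocks m bs) w"
    using blocks_in_star_concat unfolding down_closure_def by blast
next
  assume blocks: "\<forall>m. \<exists>w\<in>L. subseq (blocks m bs) w"
  show "star_concat bs \<subseteq> down_closure L"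
  proof
    fix u assume "u \<in> star_concat bs"
    then obtain m where "subseq u (blocks m bs)"
      using star_concat_subseq_blocks by blast
    moreover obtain w where "w \<in> L" "subseq (blocks m bs) w"
      using blocks by blast
    ultimately show "u \<in> down_closure L"
      unfolding down_closure_def using subseq_order.trans by blast
  qed
qed

(* Cut w after the first position where some letter b of S reaches m occurrences:
   the prefix contains b^m and no letter of S more than m times. *)
lemma saturating_prefix:
  assumes "finite S" "S \<noteq> {}" "\<forall>a\<in>S. m \<le> count_list w a"
  obtains b k where "b \<in> S" "m \<le> count_list (take k w) b"
    "\<forall>a\<in>S. count_list (take k w) a \<le> m"
proof -
  define p where "p a = (LEAST k. m \<le> count_list (take k w) a)" for a
  have reaches: "m \<le> count_list (take (p a) w) a" if "a \<in> S" for a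
    unfolding p_def by (rule LeastI[of _ "length w"]) (use assms(3) that in simp)
  obtain b where b: "b \<in> S" "\<forall>a\<in>S. p b \<le> p a"
    using arg_min_if_finite[OF assms(1,2), of p] by (metis not_le)
  have "count_list (take (p b) w) a \<le> m" if "a \<in> S" for a
  proof (cases "p b")
    case (Suc j)
    then have "\<not> m \<le> count_list (take j w) a"
      using b(2) that unfolding p_def by (intro not_less_Least) auto
    then show ?thesis using count_list_take_Suc[of j w a] Suc by simp
  qed simp
  then show ?thesis using that b reaches by blast
qed

lemma blocks_subseq_of_counts:
  assumes "finite S" "\<forall>a\<in>S. card S * m \<le> count_list w a"
  shows "\<exists>bs. distinct bs \<and> set bs = S \<and> subseq (blocks m bs) w"
  using assms
proof (induction "card S" arbitrary: S w)
  case 0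
  then show ?case by (intro exI[of _ "[]"]) auto
next
  case (Suc c)
  then have nonempty: "S \<noteq> {}" and "m \<le> card S * m"
    by auto
  with Suc.prems(2) have "\<forall>a\<in>S. m \<le> count_list w a"
    by (meson le_trans)
  with nonempty obtain b k where b: "b \<in> S" and prefix_b: "m \<le> count_list (take k w) b"
    and prefix_le: "\<forall>a\<in>S. count_list (take k w) a \<le> m"
    using saturating_prefix[OF Suc.prems(1)] by metis
  have card_rest: "card S = Suc (card (S - {b}))"
    using Suc.hyps(2) Suc.prems(1) b by simp
  have "\<forall>a\<in>S - {b}. card (S - {b}) * m \<le> count_list (drop k w) a"
  proof
    fix a assume a: "a \<in> S - {b}"
    have "count_list w a = count_list (take k w) a + count_list (drop k w) a"
      by (metis append_take_drop_id count_list_append)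
    then show "card (S - {b}) * m \<le> count_list (drop k w) a"
      using Suc.prems(2) prefix_le a card_rest by fastforce
  qed
  then obtain bs where bs: "distinct bs" "set bs = S - {b}" "subseq (blocks m bs) (drop k w)"
    using Suc.hyps(1)[of "S - {b}" "drop k w"] Suc.hyps(2) Suc.prems(1) card_rest by auto
  have "subseq (replicate m b @ blocks m bs) (take k w @ drop k w)"
    by (rule list_emb_append_mono[OF replicate_subseq_of_count[OF prefix_b] bs(3)])
  then show ?case using bs b by (intro exI[of _ "b # bs"]) auto
qed

lemma finite_witness_for_all_bounds:
  fixes Q :: "'b \<Rightarrow> nat \<Rightarrow> bool"
  assumes "finite P" "\<forall>m. \<exists>x\<in>P. Q x m" "\<And>x m m'. Q x m' \<Longrightarrow> m \<le> m' \<Longrightarrow> Q x m"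
  shows "\<exists>x\<in>P. \<forall>m. Q x m"
proof (rule ccontr)
  assume "\<not> ?thesis"
  then obtain g where g: "\<forall>x\<in>P. \<not> Q x (g x)" by metis
  obtain x where x: "x \<in> P" "Q x (sum g P)" using assms(2) by blast
  have "g x \<le> sum g P" using assms(1) x(1) by (simp add: member_le_sum)
  then show False using assms(3)[OF x(2)] g x(1) by blast
qed

lemma finite_enumerations: "finite A \<Longrightarrow> finite {bs. distinct bs \<and> set bs = A}"
  by (rule finite_subset[OF _ finite_subset_distinct]) auto

lemma unbounded_counts_iff_blocks:
  assumes "finite A"
  shows "(\<forall>m. \<exists>w\<in>L. \<forall>a\<in>A. m \<le> count_list w a) \<longleftrightarrow>
         (\<exists>bs. distinct bs \<and> set bs = A \<and> (\<forall>m. \<exists>w\<in>L. subseq (blocks m bs) w))"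
proof
  assume unbounded: "\<forall>m. \<exists>w\<in>L. \<forall>a\<in>A. m \<le> count_list w a"
  define embeds where "embeds bs m \<longleftrightarrow> (\<exists>w\<in>L. subseq (blocks m bs) w)" for bs m
  have "\<exists>bs\<in>{bs. distinct bs \<and> set bs = A}. embeds bs m" for m
  proof -
    obtain w where "w \<in> L" "\<forall>a\<in>A. card A * m \<le> count_list w a"
      using unbounded by blast
    then show ?thesis
      using blocks_subseq_of_counts[OF assms] unfolding embeds_def by blast
  qed
  moreover have "embeds bs m" if "embeds bs m'" "m \<le> m'" for bs m m'
    using that subseq_order.trans[OF blocks_mono] unfolding embeds_def by blast
  ultimately have "\<exists>bs\<in>{bs. distinct bs \<and> set bs = A}. \<forall>m. embeds bs m"
    by (intro finite_witness_for_all_bounds[OF finite_enumerations[OF assms]]) blast+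
  then show "\<exists>bs. distinct bs \<and> set bs = A \<and> (\<forall>m. \<exists>w\<in>L. subseq (blocks m bs) w)"
    unfolding embeds_def by blast
next
  assume "\<exists>bs. distinct bs \<and> set bs = A \<and> (\<forall>m. \<exists>w\<in>L. subseq (blocks m bs) w)"
  then obtain bs where bs: "distinct bs" "set bs = A" "\<forall>m. \<exists>w\<in>L. subseq (blocks m bs) w"
    by blast
  show "\<forall>m. \<exists>w\<in>L. \<forall>a\<in>A. m \<le> count_list w a"
  proof
    fix m
    obtain w where w: "w \<in> L" "subseq (blocks m bs) w"
      using bs(3) by blast
    have "m \<le> count_list w a" if "a \<in> A" for a
      using count_list_subseq[OF w(2), of a] count_list_blocks[OF bs(1), of m a] bs(2) that
      by simp
    then show "\<exists>w\<in>L. \<forall>a\<in>A. m \<le> count_list w a"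
      using w(1) by blast
  qed
qed

theorem mainTheorem7:
  fixes A :: "'a set" and L :: "'a list set" and n :: nat
  assumes "finite A" and "card A = n" and "L \<subseteq> lists A"
  shows "(\<forall>m::nat. \<exists>w\<in>L. \<forall>a\<in>A. m \<le> parikh w a) \<longleftrightarrow>
         (\<exists>bs. distinct bs \<and> set bs = A \<and> length bs = n \<and>
               star_concat bs \<subseteq> down_closure L)"
proof -
  have length_enum: "distinct bs \<and> set bs = A \<longrightarrow> length bs = n" for bs :: "'a list"
    using assms(2) distinct_card by fastforce
  show ?thesis
    unfolding parikh_def star_concat_subset_down_closure_iff
      unbounded_counts_iff_blocks[OF assms(1)]
    using length_enum by blast
qed

end
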